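(* Consider a particle in the plane with dimensionless canonical observables $x,y,p_x,p_y$ ($[x,p_x]=[y,p_y]=i$, other commutators zero) and the Hamiltonian $H(t)=\tfrac12\big(p_x^2+p_y^2+\beta(t)^2(x^2+y^2)\big)-\beta(t)M_z$, with $M_z=xp_y-yp_x$ and $\beta(t)=\beta_0+\beta_1\sin(2\pi t)$, $\beta_0,\beta_1\in\mathbb R$. Let $b(t)$ be the real $2\times2$ matrix solving $\frac{db}{dt}=\begin{pmatrix}0&1\\-\beta(t)^2&0\end{pmatrix}b(t)$, $b(0)=\mathbb 1$, and let $r(t)$ be the $4\times4$ matrix rotating simultaneously the pairs $(x,y)$ and $(p_x,p_y)$ by the angle $\gamma(t)=\int_0^t\beta(t')dt'$ about the $z$-axis, so that the evolution matrix $u(t)$ defined by $(x(t),y(t),p_x(t),p_y(t))^{T}=u(t)\,(x,y,p_x,p_y)^{T}$ (classical or Heisenberg variables) equals $u(t)=r(t)\,\mathrm{diag}(b(t),b(t))$ in the basis $(x,p_x,y,p_y)$ for each $b$-block. Suppose that for some positive integer $n$ one has $b(n)=\mathbb 1$, and that $\gamma(n)=2\pi k/m$ with $k,m$ positive integers such that $k/m\notin\mathbb Z$. Then $u(mn)=\mathbb 1$ (the full evolution closes into a loop at $t=mn$), and the loop center $\mathbf X=\frac{1}{mn}\int_0^{mn}(x(t),y(t))\,dt$ vanishes identically, both for the classical trajectories and for the quantum Heisenberg observables.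
   Context: Units: time is measured in periods of the field ($T=1$), $\hbar=1$, particle mass $1$; $\beta$ is the dimensionless magnetic field amplitude. The Hamiltonian is quadratic, so classical and quantum (Heisenberg) trajectories are given by the same matrix $u(t)$. *)

theory Defs
  imports "HOL-Analysis.Analysis"
begin

definition beta :: "real \<Rightarrow> real \<Rightarrow> real \<Rightarrow> real" where
  "beta \<beta>0 \<beta>1 t = \<beta>0 + \<beta>1 * sin (2 * pi * t)"

definition gamma :: "real \<Rightarrow> real \<Rightarrow> real \<Rightarrow> real" where
  "gamma \<beta>0 \<beta>1 t = integral {0..t} (beta \<beta>0 \<beta>1)"

definition Amat :: "real \<Rightarrow> real \<Rightarrow> real \<Rightarrow> real^2^2" where
  "Amat \<beta>0 \<beta>1 t = vector [vector [0, 1], vector [- ((beta \<beta>0 \<beta>1 t) ^ 2), 0]]"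

definition solves_b :: "real \<Rightarrow> real \<Rightarrow> (real \<Rightarrow> real^2^2) \<Rightarrow> bool" where
  "solves_b \<beta>0 \<beta>1 b \<longleftrightarrow> b 0 = mat 1 \<and>
     (\<forall>t. (b has_vector_derivative (Amat \<beta>0 \<beta>1 t ** b t)) (at t))"

text \<open>Evolution matrix u(t) = r(t) diag(b(t), b(t)) in the phase-space basis
  (x, y, p_x, p_y) (indices 1,2,3,4); r(t) rotates (x,y) and (p_x,p_y) by gamma(t)
  with the orientation generated by -beta M_z.  (x(t),y(t),p_x(t),p_y(t)) = u(t) (x,y,p_x,p_y).\<close>
definition u :: "real \<Rightarrow> real \<Rightarrow> (real \<Rightarrow> real^2^2) \<Rightarrow> real \<Rightarrow> real^4^4" where
  "u \<beta>0 \<beta>1 b t =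
    (let c = cos (gamma \<beta>0 \<beta>1 t); s = sin (gamma \<beta>0 \<beta>1 t);
         b11 = b t $ 1 $ 1; b12 = b t $ 1 $ 2; b21 = b t $ 2 $ 1; b22 = b t $ 2 $ 2
     in vector [
       vector [  c * b11, s * b11,   c * b12, s * b12],
       vector [- s * b11, c * b11, - s * b12, c * b12],
       vector [  c * b21, s * b21,   c * b22, s * b22],
       vector [- s * b21, c * b21, - s * b22, c * b22]])"

text \<open>Loop center X = (1/T) int_0^T (x(t), y(t)) dt, expressed by its coefficient
  matrix with respect to the initial variables (x,y,p_x,p_y): row 1 gives X_x, row 2 X_y.
  This covers classical trajectories and Heisenberg operators alike.\<close>
definition loop_center :: "real \<Rightarrow> real \<Rightarrow> (real \<Rightarrow> real^2^2) \<Rightarrow> real \<Rightarrow> real^4^2" where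
  "loop_center \<beta>0 \<beta>1 b T =
     (1 / T) *\<^sub>R integral {0..T} (\<lambda>t. vector [u \<beta>0 \<beta>1 b t $ 1, u \<beta>0 \<beta>1 b t $ 2])"

end

theory Submission
  imports Defs
begin

text \<open>The reduced system is Hill's equation \<open>y'' = -\<beta>(t)\<^sup>2 y\<close> with a 1-periodic
  coefficient. Wronskians of its solutions are constant, which expresses every solution in
  terms of the columns of \<open>b\<close>; hence \<open>b(t + N) = b(t) b(N)\<close> for integer \<open>N\<close>, and \<open>b(n) = 1\<close>
  makes \<open>b\<close> \<open>n\<close>-periodic. Over one such period the angle \<open>\<gamma>\<close> grows by \<open>\<theta> = \<beta>\<^sub>0 n = 2\<pi>k/m\<close>,
  so after \<open>m\<close> periods the rotation is by \<open>2\<pi>k\<close> and \<open>u\<close> closes. Splitting \<open>[0, mn]\<close> into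
  \<open>m\<close> periods, the position rows of \<open>u\<close> on the \<open>j\<close>-th period are those on the first one
  rotated by \<open>j\<theta>\<close>; since \<open>e\<^sup>i\<^sup>\<theta>\<close> is an \<open>m\<close>-th root of unity different from 1, the rotations
  sum to zero, and so does the loop centre.\<close>

lemma vector_4 [simp]:
  "(vector [a, b, c, d] :: 'a::zero^4) $ 1 = a"
  "(vector [a, b, c, d] :: 'a::zero^4) $ 2 = b"
  "(vector [a, b, c, d] :: 'a::zero^4) $ 3 = c"
  "(vector [a, b, c, d] :: 'a::zero^4) $ 4 = d"
  unfolding vector_def by simp_all

definition hill_solution :: "(real \<Rightarrow> real) \<Rightarrow> (real \<Rightarrow> real) \<Rightarrow> (real \<Rightarrow> real) \<Rightarrow> bool" where
  "hill_solution q y v \<longleftrightarrow>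
     (\<forall>t. (y has_real_derivative v t) (at t) \<and> (v has_real_derivative - q t * y t) (at t))"

lemma hill_wronskian_const:
  assumes y: "hill_solution q y v" and z: "hill_solution q z w"
  shows "y t * w t - v t * z t = y 0 * w 0 - v 0 * z 0"
proof -
  have "((\<lambda>t. y t * w t - v t * z t) has_real_derivative 0) (at s)" for s
  proof -
    have "(y has_real_derivative v s) (at s)" "(w has_real_derivative - q s * z s) (at s)"
      "(v has_real_derivative - q s * y s) (at s)" "(z has_real_derivative w s) (at s)"
      using y z by (auto simp: hill_solution_def)
    from DERIV_diff[OF DERIV_mult[OF this(1,2)] DERIV_mult[OF this(3,4)]] show ?thesis
      by (simp add: algebra_simps)
  qed
  then show ?thesis by (rule DERIV_isconst_all[rule_format])
qed

lemma hill_solution_shift: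
  assumes "hill_solution q y v" and "\<And>t. q (t + p) = q t"
  shows "hill_solution q (\<lambda>t. y (t + p)) (\<lambda>t. v (t + p))"
  unfolding hill_solution_def
proof (intro allI conjI)
  fix t
  from assms(1) have "(y has_real_derivative v (t + p)) (at (t + p))"
    "(v has_real_derivative - q (t + p) * y (t + p)) (at (t + p))"
    by (auto simp: hill_solution_def)
  then show "((\<lambda>t. y (t + p)) has_real_derivative v (t + p)) (at t)"
    "((\<lambda>t. v (t + p)) has_real_derivative - q t * y (t + p)) (at t)"
    using assms(2) by (simp_all add: DERIV_shift)
qed

lemma hill_solution_expansion:
  assumes y1: "hill_solution q y1 v1" and y2: "hill_solution q y2 v2"
    and init: "y1 0 = 1" "v1 0 = 0" "y2 0 = 0" "v2 0 = 1"
    and z: "hill_solution q z w"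
  shows "z t = z 0 * y1 t + w 0 * y2 t" and "w t = z 0 * v1 t + w 0 * v2 t"
proof -
  have W: "y1 t * v2 t - v1 t * y2 t = 1"
    using hill_wronskian_const[OF y1 y2] init by simp
  have z0: "z 0 = v2 t * z t - y2 t * w t"
    using hill_wronskian_const[OF y2 z, of t] init by simp
  have w0: "w 0 = y1 t * w t - v1 t * z t"
    using hill_wronskian_const[OF y1 z, of t] init by simp
  show "z t = z 0 * y1 t + w 0 * y2 t" "w t = z 0 * v1 t + w 0 * v2 t"
    unfolding z0 w0 using W by algebra+
qed

lemma beta_shift: "beta \<beta>0 \<beta>1 (t + real N) = beta \<beta>0 \<beta>1 t"
proof -
  have "sin (2 * pi * (t + real N)) = sin (2 * pi * t + 2 * real N * pi)"
    by (simp add: algebra_simps)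
  also have "\<dots> = sin (2 * pi * t)" by (simp add: sin_add sin_2npi cos_2npi)
  finally show ?thesis by (simp add: beta_def)
qed

lemma solves_b_column_hill:
  assumes "solves_b \<beta>0 \<beta>1 b"
  shows "hill_solution (\<lambda>t. (beta \<beta>0 \<beta>1 t)\<^sup>2) (\<lambda>t. b t $ 1 $ j) (\<lambda>t. b t $ 2 $ j)"
proof -
  have entry: "((\<lambda>t. b t $ i $ j) has_real_derivative (Amat \<beta>0 \<beta>1 t ** b t) $ i $ j) (at t)"
    for i t
  proof -
    have "bounded_linear (\<lambda>B :: real^2^2. B $ i $ j)"
      using bounded_linear_compose[OF bounded_linear_vec_nth[of j] bounded_linear_vec_nth[of i]]
      by simp
    from bounded_linear.has_vector_derivative[OF this] assms show ?thesis
      by (simp add: solves_b_def has_real_derivative_iff_has_vector_derivative)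
  qed
  show ?thesis
    using entry[of 1] entry[of 2]
    by (simp add: hill_solution_def Amat_def matrix_matrix_mult_def sum_2)
qed

lemma solves_b_shift:
  assumes b: "solves_b \<beta>0 \<beta>1 b"
  shows "b (t + real N) = b t ** b (real N)"
proof -
  let ?q = "\<lambda>t. (beta \<beta>0 \<beta>1 t)\<^sup>2"
  have b0: "b 0 = mat 1" using b by (simp add: solves_b_def)
  have col: "hill_solution ?q (\<lambda>t. b t $ 1 $ j) (\<lambda>t. b t $ 2 $ j)" for j
    using solves_b_column_hill[OF b] .
  have shifted: "hill_solution ?q (\<lambda>t. b (t + real N) $ 1 $ j) (\<lambda>t. b (t + real N) $ 2 $ j)" for j
    by (rule hill_solution_shift[OF col]) (simp add: beta_shift)
  have "b (t + real N) $ i $ j = b t $ i $ 1 * b (real N) $ 1 $ j + b t $ i $ 2 * b (real N) $ 2 $ j"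
    for i j
    using hill_solution_expansion[OF col[of 1] col[of 2] _ _ _ _ shifted[of j], of t] b0 exhaust_2[of i]
    by (auto simp: mat_def)
  then show ?thesis by (simp add: vec_eq_iff matrix_matrix_mult_def sum_2)
qed

lemma solves_b_periodic:
  assumes b: "solves_b \<beta>0 \<beta>1 b" and bn: "b (real n) = mat 1"
  shows "b (t + real (j * n)) = b t"
proof (induction j arbitrary: t)
  case (Suc j)
  have "b (t + real (Suc j * n)) = b ((t + real n) + real (j * n))" by (simp add: algebra_simps)
  also have "\<dots> = b (t + real n)" by (rule Suc.IH)
  also have "\<dots> = b t" using solves_b_shift[OF b] bn by simp
  finally show ?case .
qed simp

text \<open>\<open>gamma\<close> integrates over \<open>{0..t}\<close>, which is empty for \<open>t < 0\<close>; its closed form below agrees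
  with it only for \<open>t \<ge> 0\<close> but is continuous and quasi-periodic on all of \<open>\<real>\<close>.\<close>

definition gamma_closed :: "real \<Rightarrow> real \<Rightarrow> real \<Rightarrow> real" where
  "gamma_closed \<beta>0 \<beta>1 t = \<beta>0 * t + \<beta>1 * (1 - cos (2 * pi * t)) / (2 * pi)"

lemma gamma_eq_gamma_closed:
  assumes "0 \<le> t" shows "gamma \<beta>0 \<beta>1 t = gamma_closed \<beta>0 \<beta>1 t"
proof -
  define F where "F x = \<beta>0 * x - \<beta>1 * cos (2 * pi * x) / (2 * pi)" for x
  have "(F has_real_derivative beta \<beta>0 \<beta>1 x) (at x within {0..t})" for x
    unfolding F_def beta_def by (auto intro!: derivative_eq_intros)
  then have "(beta \<beta>0 \<beta>1 has_integral F t - F 0) {0..t}"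
    using assms by (intro fundamental_theorem_of_calculus)
      (auto simp: has_real_derivative_iff_has_vector_derivative)
  then show ?thesis
    by (simp add: gamma_def integral_unique F_def gamma_closed_def field_simps)
qed

lemma gamma_closed_shift:
  "gamma_closed \<beta>0 \<beta>1 (t + real N) = gamma_closed \<beta>0 \<beta>1 t + \<beta>0 * real N"
proof -
  have "cos (2 * pi * (t + real N)) = cos (2 * pi * t + 2 * real N * pi)"
    by (simp add: algebra_simps)
  also have "\<dots> = cos (2 * pi * t)" by (simp add: cos_add sin_2npi cos_2npi)
  finally show ?thesis by (simp add: gamma_closed_def algebra_simps)
qed

lemma gamma_of_nat: "gamma \<beta>0 \<beta>1 (real N) = \<beta>0 * real N"
  using gamma_eq_gamma_closed[of "real N"] gamma_closed_shift[of \<beta>0 \<beta>1 0 N]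
  by (simp add: gamma_closed_def)

lemma sum_cis_arith_progression:
  fixes k m :: nat
  assumes m: "m > 0" and nz: "real k / real m \<notin> \<int>"
  shows "(\<Sum>j<m. cis (a + real j * (2 * pi * real k / real m))) = 0"
proof -
  define \<theta> where "\<theta> = 2 * pi * real k / real m"
  have "cis \<theta> \<noteq> 1"
  proof
    assume "cis \<theta> = 1"
    then obtain q :: int where "\<theta> = real_of_int (2 * q) * pi"
      by (auto simp: cis_conv_exp exp_eq_1)
    then have "real k / real m = of_int q" using m by (simp add: \<theta>_def field_simps)
    with nz show False by (metis Ints_of_int)
  qed
  moreover have "cis \<theta> ^ m = 1"
  proof -
    have "real m * \<theta> = 2 * pi * real k" using m by (simp add: \<theta>_def)
    then have "cis \<theta> ^ m = cis (2 * pi * real k)" using Complex.DeMoivre[of \<theta> m] by metis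
    also have "\<dots> = 1" by (rule cis_multiple_2pi) simp
    finally show ?thesis .
  qed
  ultimately have "(\<Sum>j<m. cis \<theta> ^ j) = 0" by (simp add: sum_gp_strict)
  moreover have "(\<Sum>j<m. cis (a + real j * \<theta>)) = cis a * (\<Sum>j<m. cis \<theta> ^ j)"
    by (simp add: sum_distrib_left Complex.DeMoivre cis_mult)
  ultimately show ?thesis by (simp add: \<theta>_def)
qed

text \<open>Rows of \<open>(x, y)\<close> as linear forms in \<open>(x, y, p\<^sub>x, p\<^sub>y)\<close>: \<open>position_block B\<close> gives them for
  the unrotated motion \<open>diag(B, B)\<close>, and \<open>quarter_turn\<close> rotates such a pair by a right angle.\<close>

definition position_block :: "real^2^2 \<Rightarrow> real^4^2" where
  "position_block B = vector [vector [B $ 1 $ 1, 0, B $ 1 $ 2, 0], vector [0, B $ 1 $ 1, 0, B $ 1 $ 2]]"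

definition quarter_turn :: "real^4^2 \<Rightarrow> real^4^2" where
  "quarter_turn X = vector [X $ 2, - X $ 1]"

lemma linear_position_block: "linear position_block"
  by (rule linearI) (simp_all add: position_block_def vec_eq_iff forall_2 forall_4)

lemma linear_quarter_turn: "linear quarter_turn"
  by (rule linearI) (simp_all add: quarter_turn_def vec_eq_iff forall_2)

definition position_rows :: "real \<Rightarrow> real \<Rightarrow> (real \<Rightarrow> real^2^2) \<Rightarrow> real \<Rightarrow> real^4^2" where
  "position_rows \<beta>0 \<beta>1 b t =
     cos (gamma_closed \<beta>0 \<beta>1 t) *\<^sub>R position_block (b t)
     + sin (gamma_closed \<beta>0 \<beta>1 t) *\<^sub>R quarter_turn (position_block (b t))"

lemma u_position_rows:
  "0 \<le> t \<Longrightarrow> vector [u \<beta>0 \<beta>1 b t $ 1, u \<beta>0 \<beta>1 b t $ 2] = position_rows \<beta>0 \<beta>1 b t"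
  by (simp add: u_def position_rows_def position_block_def quarter_turn_def gamma_eq_gamma_closed
      Let_def vec_eq_iff forall_2 forall_4)

lemma continuous_on_position_rows:
  assumes "solves_b \<beta>0 \<beta>1 b"
  shows "continuous_on S (position_rows \<beta>0 \<beta>1 b)"
proof -
  have "continuous_on S b"
    using assms unfolding solves_b_def
    by (meson continuous_at_imp_continuous_on has_vector_derivative_continuous)
  then have "continuous_on S (\<lambda>t. position_block (b t))"
    by (rule linear_continuous_on_compose[OF _ linear_position_block])
  moreover from this have "continuous_on S (\<lambda>t. quarter_turn (position_block (b t)))"
    by (rule linear_continuous_on_compose[OF _ linear_quarter_turn])
  moreover have "continuous_on S (gamma_closed \<beta>0 \<beta>1)"
    unfolding gamma_closed_def by (intro continuous_intros) auto
  ultimately show ?thesis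
    unfolding position_rows_def by (intro continuous_intros)
qed

lemma sum_position_rows_translates:
  assumes b: "solves_b \<beta>0 \<beta>1 b" and bn: "b (real n) = mat 1"
    and phase: "\<beta>0 * real n = 2 * pi * real k / real m"
    and m: "m > 0" and nz: "real k / real m \<notin> \<int>"
  shows "(\<Sum>i<m. position_rows \<beta>0 \<beta>1 b (t + real i * real n)) = 0"
proof -
  let ?G = "gamma_closed \<beta>0 \<beta>1" and ?P = "position_block (b t)"
  let ?\<phi> = "\<lambda>i. ?G t + real i * (2 * pi * real k / real m)"
  have "position_rows \<beta>0 \<beta>1 b (t + real i * real n)
      = cos (?\<phi> i) *\<^sub>R ?P + sin (?\<phi> i) *\<^sub>R quarter_turn ?P" for i
  proof -
    have "b (t + real i * real n) = b t"
      using solves_b_periodic[OF b bn, of t i] by simp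
    moreover have "?G (t + real i * real n) = ?G t + real i * (\<beta>0 * real n)"
      using gamma_closed_shift[of \<beta>0 \<beta>1 t "i * n"] by (simp add: mult.left_commute)
    ultimately show ?thesis unfolding position_rows_def phase by (simp only:)
  qed
  moreover have "(\<Sum>i<m. cos (?\<phi> i)) = 0" and "(\<Sum>i<m. sin (?\<phi> i)) = 0"
    using arg_cong[OF sum_cis_arith_progression[OF m nz, of "?G t"], of Re]
      arg_cong[OF sum_cis_arith_progression[OF m nz, of "?G t"], of Im]
    by (simp_all add: Re_sum Im_sum)
  ultimately show ?thesis by (simp add: sum.distrib flip: scaleR_sum_left)
qed

lemma integral_Icc_eq_sum_translates:
  fixes f :: "real \<Rightarrow> 'a::banach"
  assumes f: "continuous_on UNIV f" and p: "0 \<le> p"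
  shows "integral {0..real m * p} f = (\<Sum>i<m. integral {0..p} (\<lambda>t. f (t + real i * p)))"
proof (induction m)
  case (Suc m)
  have "f integrable_on {0..real (Suc m) * p}"
    by (intro integrable_continuous_real continuous_on_subset[OF f]) simp
  then have "integral {0..real (Suc m) * p} f
      = integral {0..real m * p} f + integral {real m * p..real (Suc m) * p} f"
    using p by (intro Henstock_Kurzweil_Integration.integral_combine[symmetric]) (auto intro: mult_right_mono)
  also have "integral {real m * p..real (Suc m) * p} f = integral {0..p} (\<lambda>t. f (t + real m * p))"
    using integral_shift_Icc_real[of 0 p f "real m * p"] by (simp add: o_def add.commute algebra_simps)
  finally show ?case using Suc by simp
qed simp

lemma u_closes:
  assumes b: "solves_b \<beta>0 \<beta>1 b" and bn: "b (real n) = mat 1"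
    and phase: "\<beta>0 * real n = 2 * pi * real k / real m" and m: "m > 0"
  shows "u \<beta>0 \<beta>1 b (real (m * n)) = mat 1"
proof -
  have "gamma \<beta>0 \<beta>1 (real (m * n)) = real m * (\<beta>0 * real n)"
    using gamma_of_nat[of \<beta>0 \<beta>1 "m * n"] by simp
  also have "\<dots> = 2 * real k * pi" using phase m by simp
  moreover have "b (real (m * n)) = mat 1"
    using solves_b_periodic[OF b bn, of 0 m] b by (simp add: solves_b_def)
  ultimately show ?thesis
    by (simp add: u_def Let_def cos_2npi sin_2npi vec_eq_iff forall_4 mat_def)
qed

lemma loop_center_closed_orbit:
  assumes b: "solves_b \<beta>0 \<beta>1 b" and bn: "b (real n) = mat 1"
    and phase: "\<beta>0 * real n = 2 * pi * real k / real m"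
    and m: "m > 0" and nz: "real k / real m \<notin> \<int>"
  shows "loop_center \<beta>0 \<beta>1 b (real (m * n)) = 0"
proof -
  let ?X = "position_rows \<beta>0 \<beta>1 b"
  note cont = continuous_on_position_rows[OF b]
  have "integral {0..real m * real n} (\<lambda>t. vector [u \<beta>0 \<beta>1 b t $ 1, u \<beta>0 \<beta>1 b t $ 2])
      = integral {0..real m * real n} ?X"
    by (intro integral_cong) (simp add: u_position_rows)
  also have "\<dots> = (\<Sum>i<m. integral {0..real n} (\<lambda>t. ?X (t + real i * real n)))"
    by (rule integral_Icc_eq_sum_translates[OF cont]) simp
  also have "\<dots> = integral {0..real n} (\<lambda>t. \<Sum>i<m. ?X (t + real i * real n))"
    by (intro integral_sum[symmetric] integrable_continuous_real continuous_on_compose2[OF cont])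
      (auto intro: continuous_intros)
  also have "\<dots> = 0"
    by (simp add: sum_position_rows_translates[OF b bn phase m nz])
  finally show ?thesis by (simp add: loop_center_def)
qed

theorem proposition2:
  fixes \<beta>0 \<beta>1 :: real and b :: "real \<Rightarrow> real^2^2" and n k m :: nat
  assumes "solves_b \<beta>0 \<beta>1 b"
    and "n > 0" and "k > 0" and "m > 0"
    and "b (real n) = mat 1"
    and "gamma \<beta>0 \<beta>1 (real n) = 2 * pi * real k / real m"
    and "real k / real m \<notin> \<int>"
  shows "u \<beta>0 \<beta>1 b (real (m * n)) = mat 1 \<and> loop_center \<beta>0 \<beta>1 b (real (m * n)) = 0"
proof -
  from assms(6) have phase: "\<beta>0 * real n = 2 * pi * real k / real m"
    by (simp add: gamma_of_nat)
  show ?thesis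
    using u_closes[OF assms(1,5) phase assms(4)]
      loop_center_closed_orbit[OF assms(1,5) phase assms(4,7)] by simp
qed

end
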